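(* Let $D$ be a crossing optimal normalized 2-page book drawing of $K_n$. For each integer $j$ with $0\le j\le\lfloor n/2\rfloor-2$, let $D_j$ be the drawing of $K_{n-j}$ obtained from $D$ by deleting the $j$ rightmost vertices $n-j+1,\dots,n$ and their incident edges. Then \[ E_{\le\le k}(D_j)=3\binom{k+3}3\quad\text{for all }0\le k\le\lfloor n/2\rfloor-2-j. \]
   Context: Normalized 2-page book drawing of $K_n$: vertices $(1,0),\dots,(n,0)$ labelled $1,\dots,n$; edges $i(i+1)$ on the spine; edge $1n$ in the upper half-plane; every other edge $ij$ a semicircle over $[i,j]$ in the upper or lower half-plane. Crossing optimal: exactly $Z(n)=\frac14\lfloor\frac n2\rfloor\lfloor\frac{n-1}2\rfloor\lfloor\frac{n-2}2\rfloor\lfloor\frac{n-3}2\rfloor$ crossings. For a good drawing $D$ of $K_m$: for distinct vertices $p,q,r$, $r$ is on the left (right) of $\overrightarrow{pq}$ if the triangle with edges $pq,qr,rp$ traced in order $p,q,r$ is counterclockwise (clockwise); an edge is a $k$-edge if exactly $k$ of the other $m-2$ vertices lie on one side of it; each edge has a unique such index in $\{0,\dots,\lfloor m/2\rfloor-1\}$, $E_k(D)$ counts edges with index $k$, and $E_{\le\le k}(D)=\sum_{i=0}^k(k+1-i)E_i(D)$. *)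

theory Defs
  imports Complex_Main
begin

text \<open>A normalized 2-page book drawing of K_n is encoded combinatorially by a page
assignment pg :: nat => nat => bool: for vertices i < j with j \<ge> i + 2, the edge ij is a
semicircle over [i,j] in the upper half-plane if pg i j and in the lower half-plane
otherwise.  Spine edges i(i+1) do not depend on pg.\<close>

definition normalized :: "(nat \<Rightarrow> nat \<Rightarrow> bool) \<Rightarrow> nat \<Rightarrow> bool" where
  "normalized pg n \<longleftrightarrow> pg 1 n"

text \<open>Crossings: two non-spine edges ab and cd cross iff they lie on the same page and
their endpoints interleave, a < c < b < d (each crossing pair is counted once).\<close>

definition crossings :: "(nat \<Rightarrow> nat \<Rightarrow> bool) \<Rightarrow> nat \<Rightarrow> nat" where
  "crossings pg n = card {(a, b, c, d). 1 \<le> a \<and> a < c \<and> c < b \<and> b < d \<and> d \<le> n \<and> pg a b = pg c d}"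

definition Z :: "nat \<Rightarrow> real" where
  "Z n = (1/4) * real ((n div 2) * ((n - 1) div 2) * ((n - 2) div 2) * ((n - 3) div 2))"

definition crossing_optimal :: "(nat \<Rightarrow> nat \<Rightarrow> bool) \<Rightarrow> nat \<Rightarrow> bool" where
  "crossing_optimal pg n \<longleftrightarrow> real (crossings pg n) = Z n"

text \<open>Orientation of the triangle traced p, q, r (distinct vertices) in the drawing.
For sorted vertices a < b < c, the triangle traced a, b, c consists of the path a-b-c and the
arc ac spanning over it; it is counterclockwise iff ac is on the upper page.  Tracing in an
even (cyclic) order keeps the orientation, an odd order reverses it.\<close>

definition ccw :: "(nat \<Rightarrow> nat \<Rightarrow> bool) \<Rightarrow> nat \<Rightarrow> nat \<Rightarrow> nat \<Rightarrow> bool" where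
  "ccw pg p q r =
    (let lo = min p (min q r); hi = max p (max q r) in
     if (p < q \<and> q < r) \<or> (q < r \<and> r < p) \<or> (r < p \<and> p < q) then pg lo hi else \<not> pg lo hi)"

text \<open>Drawing D_j / of K_m on vertices 1..m (the sub-drawing induced by the first m vertices).\<close>

definition left_count :: "(nat \<Rightarrow> nat \<Rightarrow> bool) \<Rightarrow> nat \<Rightarrow> nat \<Rightarrow> nat \<Rightarrow> nat" where
  "left_count pg m p q = card {r \<in> {1..m}. r \<noteq> p \<and> r \<noteq> q \<and> ccw pg p q r}"

definition right_count :: "(nat \<Rightarrow> nat \<Rightarrow> bool) \<Rightarrow> nat \<Rightarrow> nat \<Rightarrow> nat \<Rightarrow> nat" where
  "right_count pg m p q = card {r \<in> {1..m}. r \<noteq> p \<and> r \<noteq> q \<and> \<not> ccw pg p q r}"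

definition is_k_edge :: "(nat \<Rightarrow> nat \<Rightarrow> bool) \<Rightarrow> nat \<Rightarrow> nat \<Rightarrow> nat \<Rightarrow> nat \<Rightarrow> bool" where
  "is_k_edge pg m k p q \<longleftrightarrow> left_count pg m p q = k \<or> right_count pg m p q = k"

definition E :: "(nat \<Rightarrow> nat \<Rightarrow> bool) \<Rightarrow> nat \<Rightarrow> nat \<Rightarrow> nat" where
  "E pg m k = card {(p, q). 1 \<le> p \<and> p < q \<and> q \<le> m \<and> is_k_edge pg m k p q}"

definition E_le_le :: "(nat \<Rightarrow> nat \<Rightarrow> bool) \<Rightarrow> nat \<Rightarrow> nat \<Rightarrow> nat" where
  "E_le_le pg m k = (\<Sum>i\<le>k. (k + 1 - i) * E pg m i)"

end

theory Submission
  imports Defs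
begin

text \<open>For any drawing of \<open>K\<^sub>m\<close> with \<open>m \<ge> 2k + 4\<close> one has \<open>E\<^sub>\<le>\<^sub>\<le>\<^sub>k \<ge> 3 (k+3 choose 3)\<close>.  When a
  vertex \<open>v\<close> is added on the right, the edges at \<open>v\<close> have left counts \<open>0, \<dots>, m - 1\<close>, each
  once, and contribute \<open>(k+1)(k+2)\<close> to \<open>E\<^sub>\<le>\<^sub>\<le>\<^sub>k\<^sub>+\<^sub>1\<close>; every old edge of index at most \<open>k\<close>
  whose index is not raised by \<open>v\<close> contributes one more than it did to \<open>E\<^sub>\<le>\<^sub>\<le>\<^sub>k\<close>, and by
  induction on deleting the leftmost vertex there are at least \<open>(k+1)(k+2)/2\<close> of them.

  On the other hand \<open>cr(D) = 3 (n choose 4) - \<Sum>\<^sub>e L(e) R(e)\<close>, and \<open>\<Sum>\<^sub>e L(e) R(e)\<close> is an affine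
  function of the \<open>E\<^sub>\<le>\<^sub>\<le>\<^sub>i\<close> with negative coefficients.  Hence \<open>cr(D) = Z(n)\<close> forces all these
  lower bounds to be tight for \<open>D\<close>.  Tightness survives deleting the rightmost vertex, since
  the decomposition above splits a tight bound into two bounds which then must be tight too.\<close>

definition lefts :: "(nat \<Rightarrow> nat \<Rightarrow> bool) \<Rightarrow> nat \<Rightarrow> nat \<Rightarrow> nat \<Rightarrow> nat \<Rightarrow> nat set" where
  "lefts pg a b p q = {r \<in> {a..b}. r \<noteq> p \<and> r \<noteq> q \<and> ccw pg p q r}"

definition rights :: "(nat \<Rightarrow> nat \<Rightarrow> bool) \<Rightarrow> nat \<Rightarrow> nat \<Rightarrow> nat \<Rightarrow> nat \<Rightarrow> nat set" where
  "rights pg a b p q = {r \<in> {a..b}. r \<noteq> p \<and> r \<noteq> q \<and> \<not> ccw pg p q r}"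

definition nleft :: "(nat \<Rightarrow> nat \<Rightarrow> bool) \<Rightarrow> nat \<Rightarrow> nat \<Rightarrow> nat \<Rightarrow> nat \<Rightarrow> nat" where
  "nleft pg a b p q = card (lefts pg a b p q)"

definition nright :: "(nat \<Rightarrow> nat \<Rightarrow> bool) \<Rightarrow> nat \<Rightarrow> nat \<Rightarrow> nat \<Rightarrow> nat \<Rightarrow> nat" where
  "nright pg a b p q = card (rights pg a b p q)"

definition edge_index :: "(nat \<Rightarrow> nat \<Rightarrow> bool) \<Rightarrow> nat \<Rightarrow> nat \<Rightarrow> nat \<Rightarrow> nat \<Rightarrow> nat" where
  "edge_index pg a b p q = min (nleft pg a b p q) (nright pg a b p q)"

definition edges :: "nat \<Rightarrow> nat \<Rightarrow> (nat \<times> nat) set" where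
  "edges a b = {(p, q). a \<le> p \<and> p < q \<and> q \<le> b}"

text \<open>\<open>E_weight pg a b (Suc k)\<close> is \<open>E\<^sub>\<le>\<^sub>\<le>\<^sub>k\<close> of the sub-drawing on the vertices \<open>{a..b}\<close>;
  truncated subtraction discards the edges of index above \<open>k\<close>.\<close>

definition E_weight :: "(nat \<Rightarrow> nat \<Rightarrow> bool) \<Rightarrow> nat \<Rightarrow> nat \<Rightarrow> nat \<Rightarrow> nat" where
  "E_weight pg a b j = (\<Sum>(p, q)\<in>edges a b. j - edge_index pg a b p q)"

lemma finite_edges [simp]: "finite (edges a b)"
  by (rule finite_subset[of _ "{a..b} \<times> {a..b}"]) (auto simp: edges_def)

lemma edges_Suc: "edges a (Suc b) = edges a b \<union> (\<lambda>p. (p, Suc b)) ` {a..b}"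
  by (auto simp: edges_def)

lemma ccw_ordered: "p < q \<Longrightarrow> q < r \<Longrightarrow> ccw pg p q r = pg p r"
  unfolding ccw_def by (simp add: Let_def min_def max_def)

lemma nleft_plus_nright:
  assumes "p \<in> {a..b}" "q \<in> {a..b}" "p \<noteq> q"
  shows "nleft pg a b p q + nright pg a b p q = b - a - 1"
proof -
  have "lefts pg a b p q \<union> rights pg a b p q = {a..b} - {p, q}"
    and "lefts pg a b p q \<inter> rights pg a b p q = {}"
    by (auto simp: lefts_def rights_def)
  moreover have "card ({a..b} - {p, q}) = b - a - 1"
    using assms by (subst card_Diff_subset) auto
  ultimately show ?thesis
    unfolding nleft_def nright_def by (metis card_Un_disjoint finite_Diff finite_Un finite_atLeastAtMost)
qed

lemma nleft_nright_Suc_right: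
  assumes "a \<le> p" "p < q" "q \<le> b"
  shows "nleft pg a (Suc b) p q = nleft pg a b p q + (if ccw pg p q (Suc b) then 1 else 0)"
    and "nright pg a (Suc b) p q = nright pg a b p q + (if ccw pg p q (Suc b) then 0 else 1)"
proof -
  have ivl: "{a..Suc b} = insert (Suc b) {a..b}" using assms by auto
  have "lefts pg a (Suc b) p q =
      (if ccw pg p q (Suc b) then insert (Suc b) (lefts pg a b p q) else lefts pg a b p q)"
    and "rights pg a (Suc b) p q =
      (if ccw pg p q (Suc b) then rights pg a b p q else insert (Suc b) (rights pg a b p q))"
    using assms unfolding lefts_def rights_def ivl by auto
  then show "nleft pg a (Suc b) p q = nleft pg a b p q + (if ccw pg p q (Suc b) then 1 else 0)"
    and "nright pg a (Suc b) p q = nright pg a b p q + (if ccw pg p q (Suc b) then 0 else 1)"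
    unfolding nleft_def nright_def by (simp_all add: lefts_def rights_def)
qed

lemma nleft_nright_Suc_left:
  assumes "Suc a \<le> p" "p < q" "q \<le> b"
  shows "nleft pg a b p q = nleft pg (Suc a) b p q + (if ccw pg p q a then 1 else 0)"
    and "nright pg a b p q = nright pg (Suc a) b p q + (if ccw pg p q a then 0 else 1)"
proof -
  have ivl: "{a..b} = insert a {Suc a..b}" using assms by auto
  have "lefts pg a b p q =
      (if ccw pg p q a then insert a (lefts pg (Suc a) b p q) else lefts pg (Suc a) b p q)"
    and "rights pg a b p q =
      (if ccw pg p q a then rights pg (Suc a) b p q else insert a (rights pg (Suc a) b p q))"
    using assms unfolding lefts_def rights_def ivl by auto
  then show "nleft pg a b p q = nleft pg (Suc a) b p q + (if ccw pg p q a then 1 else 0)"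
    and "nright pg a b p q = nright pg (Suc a) b p q + (if ccw pg p q a then 0 else 1)"
    unfolding nleft_def nright_def by (simp_all add: lefts_def rights_def)
qed

lemma card_filter_split: "finite S \<Longrightarrow> card {r \<in> S. P r} + card {r \<in> S. \<not> P r} = card S"
  by (subst card_Un_disjoint[symmetric]) (auto intro: arg_cong[where f = card])

text \<open>From \<open>(x, W)\<close> to \<open>(y, W')\<close> the first branch strictly increases, the second strictly
  decreases, and the first stays below the second.  With \<open>W\<close> the vertices before \<open>x\<close>, this
  separates the left counts of the edges to an extreme vertex.\<close>

lemma signed_count_neq:
  fixes U :: "nat \<Rightarrow> bool"
  assumes "finite W'" "W \<union> {x} \<subseteq> W'" "x \<notin> W" "card W' \<le> N"
  shows "(if U x then card {r \<in> W. U r} else N - card {r \<in> W. \<not> U r}) \<noteq>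
         (if U y then card {r \<in> W'. U r} else N - card {r \<in> W'. \<not> U r})"
proof -
  have "finite W" using assms(1,2) finite_subset by auto
  have split: "card {r \<in> W'. U r} + card {r \<in> W'. \<not> U r} = card W'"
    using assms(1) by (rule card_filter_split)
  have "card {r \<in> W. U r} + 1 \<le> card {r \<in> W'. U r}" if "U x"
  proof -
    have "insert x {r \<in> W. U r} \<subseteq> {r \<in> W'. U r}" using assms that by auto
    from card_mono[OF _ this] assms \<open>finite W\<close> show ?thesis by auto
  qed
  moreover have "card {r \<in> W. \<not> U r} + 1 \<le> card {r \<in> W'. \<not> U r}" if "\<not> U x"
  proof -
    have "insert x {r \<in> W. \<not> U r} \<subseteq> {r \<in> W'. \<not> U r}" using assms that by auto
    from card_mono[OF _ this] assms \<open>finite W\<close> show ?thesis by auto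
  qed
  ultimately show ?thesis using split assms(4) by auto
qed

lemma nleft_rightmost:
  assumes "a \<le> p" "p \<le> b"
  shows "nleft pg a (Suc b) p (Suc b) =
    (if pg p (Suc b) then card {r \<in> {a..<p}. pg r (Suc b)}
     else (b - a) - card {r \<in> {a..<p}. \<not> pg r (Suc b)})"
proof -
  have lefts_eq: "lefts pg a (Suc b) p (Suc b) =
      {r \<in> {a..<p}. pg r (Suc b)} \<union> (if pg p (Suc b) then {} else {p<..<Suc b})"
    using assms unfolding lefts_def ccw_def by (auto simp: Let_def min_def max_def)
  have "nleft pg a (Suc b) p (Suc b) =
      card {r \<in> {a..<p}. pg r (Suc b)} + (if pg p (Suc b) then 0 else b - p)"
    unfolding nleft_def lefts_eq by (subst card_Un_disjoint) auto
  moreover have "card {r \<in> {a..<p}. pg r (Suc b)} + card {r \<in> {a..<p}. \<not> pg r (Suc b)} = p - a"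
    using card_filter_split[of "{a..<p}"] by simp
  ultimately show ?thesis using assms by auto
qed

lemma nleft_leftmost:
  assumes "a < q" "q \<le> b"
  shows "nleft pg a b a q =
    (if pg a q then card {r \<in> {q<..b}. pg a r}
     else (b - a - 1) - card {r \<in> {q<..b}. \<not> pg a r})"
proof -
  have lefts_eq: "lefts pg a b a q = (if pg a q then {} else {a<..<q}) \<union> {r \<in> {q<..b}. pg a r}"
    using assms unfolding lefts_def ccw_def by (auto simp: Let_def min_def max_def)
  have "nleft pg a b a q = (if pg a q then 0 else q - a - 1) + card {r \<in> {q<..b}. pg a r}"
    unfolding nleft_def lefts_eq by (subst card_Un_disjoint) auto
  moreover have "card {r \<in> {q<..b}. pg a r} + card {r \<in> {q<..b}. \<not> pg a r} = b - q"
    using card_filter_split[of "{q<..b}"] by simp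
  ultimately show ?thesis using assms by auto
qed

lemma bij_betw_atLeastAtMost_0_if_inj_on:
  assumes "inj_on f A" "f ` A \<subseteq> {0..m}" "card A = Suc m"
  shows "bij_betw f A {0..m}"
proof -
  have "card (f ` A) = card {0..m}" using assms by (simp add: card_image)
  then have "f ` A = {0..m}" using assms(2) by (intro card_subset_eq) auto
  then show ?thesis using assms(1) by (simp add: bij_betw_def)
qed

lemma bij_betw_nleft_rightmost:
  assumes "a \<le> b"
  shows "bij_betw (\<lambda>p. nleft pg a (Suc b) p (Suc b)) {a..b} {0..b - a}"
proof (rule bij_betw_atLeastAtMost_0_if_inj_on)
  let ?f = "\<lambda>p. nleft pg a (Suc b) p (Suc b)"
  have neq: "?f u \<noteq> ?f v" if "u \<in> {a..b}" "v \<in> {a..b}" "u < v" for u v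
  proof -
    have "(if pg u (Suc b) then card {r \<in> {a..<u}. pg r (Suc b)}
           else (b - a) - card {r \<in> {a..<u}. \<not> pg r (Suc b)}) \<noteq>
          (if pg v (Suc b) then card {r \<in> {a..<v}. pg r (Suc b)}
           else (b - a) - card {r \<in> {a..<v}. \<not> pg r (Suc b)})"
      by (rule signed_count_neq) (use that in auto)
    then show ?thesis using that by (simp add: nleft_rightmost)
  qed
  show "inj_on ?f {a..b}"
    by (rule inj_onI, rule ccontr) (metis neq linorder_neqE_nat)
  show "?f ` {a..b} \<subseteq> {0..b - a}"
    using nleft_plus_nright[of _ a "Suc b" "Suc b" pg] by fastforce
qed (use assms in auto)

lemma bij_betw_nleft_leftmost:
  assumes "a < b"
  shows "bij_betw (\<lambda>q. nleft pg a b a q) {Suc a..b} {0..b - a - 1}"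
proof (rule bij_betw_atLeastAtMost_0_if_inj_on)
  let ?f = "\<lambda>q. nleft pg a b a q"
  have neq: "?f u \<noteq> ?f v" if "u \<in> {Suc a..b}" "v \<in> {Suc a..b}" "v < u" for u v
  proof -
    have "(if pg a u then card {r \<in> {u<..b}. pg a r}
           else (b - a - 1) - card {r \<in> {u<..b}. \<not> pg a r}) \<noteq>
          (if pg a v then card {r \<in> {v<..b}. pg a r}
           else (b - a - 1) - card {r \<in> {v<..b}. \<not> pg a r})"
      by (rule signed_count_neq) (use that in auto)
    then show ?thesis using that by (simp add: nleft_leftmost)
  qed
  show "inj_on ?f {Suc a..b}"
    by (rule inj_onI, rule ccontr) (metis neq linorder_neqE_nat)
  show "?f ` {Suc a..b} \<subseteq> {0..b - a - 1}"
  proof (rule image_subsetI)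
    fix q assume "q \<in> {Suc a..b}"
    then show "?f q \<in> {0..b - a - 1}" using nleft_plus_nright[of a a b q pg] by auto
  qed
qed (use assms in auto)

lemma sum_atMost_Suc_minus: "2 * (\<Sum>i\<le>k. Suc k - i) = (k + 1) * (k + 2)"
proof (induction k)
  case (Suc k)
  have "(\<Sum>i\<le>Suc k. Suc (Suc k) - i) = Suc (Suc k) + (\<Sum>i\<le>k. Suc k - i)"
    by (subst sum.atMost_Suc_shift) simp
  then show ?case using Suc by simp
qed simp

lemma sum_Suc_minus_min_mirror:
  assumes "2 * k + 1 \<le> N"
  shows "(\<Sum>i\<in>{0..N}. Suc k - min i (N - i)) = (k + 1) * (k + 2)"
proof -
  have half: "2 * (\<Sum>i\<in>{0..N}. Suc k - i) = (k + 1) * (k + 2)"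
  proof -
    have "(\<Sum>i\<in>{0..N}. Suc k - i) = (\<Sum>i\<le>k. Suc k - i)"
      by (rule sum.mono_neutral_right) (use assms in auto)
    then show ?thesis using sum_atMost_Suc_minus[of k] by simp
  qed
  have "(\<Sum>i\<in>{0..N}. Suc k - min i (N - i)) = (\<Sum>i\<in>{0..N}. (Suc k - i) + (Suc k - (N - i)))"
    by (rule sum.cong) (use assms in auto)
  also have "\<dots> = (\<Sum>i\<in>{0..N}. Suc k - i) + (\<Sum>i\<in>{0..N}. Suc k - (N - i))"
    by (rule sum.distrib)
  also have "(\<Sum>i\<in>{0..N}. Suc k - (N - i)) = (\<Sum>i\<in>{0..N}. Suc k - i)"
    by (subst sum.atLeastAtMost_rev) simp
  finally show ?thesis using half by simp
qed

lemma sum_index_weights_rightmost: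
  assumes "a \<le> b" "2 * k + 1 \<le> b - a"
  shows "(\<Sum>p\<in>{a..b}. Suc k - edge_index pg a (Suc b) p (Suc b)) = (k + 1) * (k + 2)"
proof -
  have "(\<Sum>p\<in>{a..b}. Suc k - edge_index pg a (Suc b) p (Suc b)) =
        (\<Sum>p\<in>{a..b}. (\<lambda>i. Suc k - min i (b - a - i)) (nleft pg a (Suc b) p (Suc b)))"
  proof (rule sum.cong)
    fix p assume "p \<in> {a..b}"
    then have "nleft pg a (Suc b) p (Suc b) + nright pg a (Suc b) p (Suc b) = b - a"
      using nleft_plus_nright[of p a "Suc b" "Suc b" pg] by auto
    then show "Suc k - edge_index pg a (Suc b) p (Suc b) =
        (\<lambda>i. Suc k - min i (b - a - i)) (nleft pg a (Suc b) p (Suc b))"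
      unfolding edge_index_def by simp
  qed simp
  also have "\<dots> = (\<Sum>i\<in>{0..b - a}. Suc k - min i (b - a - i))"
    by (rule sum.reindex_bij_betw[OF bij_betw_nleft_rightmost[OF assms(1)]])
  also have "\<dots> = (k + 1) * (k + 2)"
    by (rule sum_Suc_minus_min_mirror) (use assms in auto)
  finally show ?thesis .
qed

text \<open>Adding the vertex \<open>Suc b\<close> raises the index of an old edge by at most one; the edges counted
  here are those of index at most \<open>k\<close> whose index does not change.\<close>

definition persistent_edges :: "(nat \<Rightarrow> nat \<Rightarrow> bool) \<Rightarrow> nat \<Rightarrow> nat \<Rightarrow> nat \<Rightarrow> (nat \<times> nat) set" where
  "persistent_edges pg a b k =
    {(p, q) \<in> edges a b. edge_index pg a (Suc b) p q = edge_index pg a b p q \<and> edge_index pg a b p q \<le> k}"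

lemma finite_persistent_edges [simp]: "finite (persistent_edges pg a b k)"
  by (rule finite_subset[OF _ finite_edges[of a b]]) (auto simp: persistent_edges_def)

lemma Suc_minus_edge_index_Suc_right:
  assumes "a \<le> p" "p < q" "q \<le> b"
  shows "Suc k - edge_index pg a (Suc b) p q = (k - edge_index pg a b p q) +
     (if edge_index pg a (Suc b) p q = edge_index pg a b p q \<and> edge_index pg a b p q \<le> k then 1 else 0)"
  using nleft_nright_Suc_right[OF assms, of pg] unfolding edge_index_def by (auto split: if_splits)

lemma E_weight_Suc_right:
  assumes "a \<le> b" "2 * k + 1 \<le> b - a"
  shows "E_weight pg a (Suc b) (Suc k) = E_weight pg a b k + card (persistent_edges pg a b k) + (k + 1) * (k + 2)"
proof -
  let ?stays = "\<lambda>p q. edge_index pg a (Suc b) p q = edge_index pg a b p q \<and> edge_index pg a b p q \<le> k"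
  have disjoint: "edges a b \<inter> (\<lambda>p. (p, Suc b)) ` {a..b} = {}" by (auto simp: edges_def)
  have "E_weight pg a (Suc b) (Suc k) = (\<Sum>(p, q)\<in>edges a b. Suc k - edge_index pg a (Suc b) p q)
      + (\<Sum>(p, q)\<in>(\<lambda>p. (p, Suc b)) ` {a..b}. Suc k - edge_index pg a (Suc b) p q)"
    unfolding E_weight_def edges_Suc by (rule sum.union_disjoint) (use disjoint in auto)
  also have "(\<Sum>(p, q)\<in>(\<lambda>p. (p, Suc b)) ` {a..b}. Suc k - edge_index pg a (Suc b) p q)
      = (\<Sum>p\<in>{a..b}. Suc k - edge_index pg a (Suc b) p (Suc b))"
    by (subst sum.reindex) (auto simp: inj_on_def)
  also have "\<dots> = (k + 1) * (k + 2)"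
    by (rule sum_index_weights_rightmost[OF assms])
  also have "(\<Sum>(p, q)\<in>edges a b. Suc k - edge_index pg a (Suc b) p q)
      = (\<Sum>(p, q)\<in>edges a b. (k - edge_index pg a b p q) + (if ?stays p q then 1 else 0))"
    by (rule sum.cong) (auto simp: edges_def Suc_minus_edge_index_Suc_right)
  also have "\<dots> = E_weight pg a b k + (\<Sum>(p, q)\<in>edges a b. if ?stays p q then 1 else 0)"
    unfolding E_weight_def by (simp add: sum.distrib case_prod_beta)
  also have "(\<Sum>(p, q)\<in>edges a b. if ?stays p q then 1 else 0) = card (persistent_edges pg a b k)"
  proof -
    have "persistent_edges pg a b k = {e \<in> edges a b. ?stays (fst e) (snd e)}"
      by (auto simp: persistent_edges_def)
    then show ?thesis by (simp add: sum.If_cases case_prod_beta Int_def conj_commute)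
  qed
  finally show ?thesis .
qed

text \<open>\<open>l, r\<close>: left and right counts of an edge within \<open>{Suc a..b}\<close>; \<open>x, y\<close>: whether \<open>Suc b\<close>
  resp. \<open>a\<close> lies on its left.\<close>

lemma index_persistence_arith:
  fixes l r x y N k :: nat
  assumes "l + r + 1 = N" "x \<le> 1" "y \<le> 1" "2 * Suc k \<le> N"
    "min (l + x) (r + (1 - x)) = min l r" "min l r \<le> k"
  shows "min (l + y + x) (r + (1 - y) + (1 - x)) = min (l + y) (r + (1 - y))
    \<and> min (l + y) (r + (1 - y)) \<le> Suc k"
proof -
  have "x = 0 \<or> x = 1" "y = 0 \<or> y = 1" using assms by auto
  then show ?thesis using assms by (elim disjE) (auto simp: min_def split: if_splits)
qed

lemma card_preimage_bij_betw:
  assumes "bij_betw f A B" "J \<subseteq> B"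
  shows "card {x \<in> A. f x \<in> J} = card J"
proof -
  have "f ` {x \<in> A. f x \<in> J} = J" and "inj_on f {x \<in> A. f x \<in> J}"
    using assms unfolding bij_betw_def by (auto intro: inj_on_subset)
  then show ?thesis by (metis card_image)
qed

text \<open>The edges \<open>a q\<close> at the leftmost vertex have left counts \<open>0, \<dots>, b - a - 1\<close>, each once.
  If the new vertex \<open>Suc b\<close> lies to their right, those with left count at most \<open>k\<close> persist,
  otherwise those with right count at most \<open>k\<close> do.\<close>

lemma card_persistent_edges_leftmost:
  assumes "a < b" "2 * k + 1 \<le> b - a"
  shows "k + 1 \<le> card {q \<in> {Suc a..b}. (a, q) \<in> persistent_edges pg a b k}"
proof -
  let ?N = "b - a - 1"
  define J where "J = (if pg a (Suc b) then (\<lambda>i. ?N - i) ` {0..k} else {0..k})"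
  have "inj_on (\<lambda>i. ?N - i) {0..k}"
    using assms by (auto simp: inj_on_def)
  then have card_J: "card J = k + 1"
    by (simp add: J_def card_image)
  have preimage: "card {q \<in> {Suc a..b}. nleft pg a b a q \<in> J} = card J"
    by (rule card_preimage_bij_betw[OF bij_betw_nleft_leftmost[OF assms(1)]])
      (use assms in \<open>auto simp: J_def\<close>)
  have persist: "{q \<in> {Suc a..b}. nleft pg a b a q \<in> J} \<subseteq>
      {q \<in> {Suc a..b}. (a, q) \<in> persistent_edges pg a b k}"
  proof clarify
    fix q assume q: "q \<in> {Suc a..b}" "nleft pg a b a q \<in> J"
    have "nleft pg a b a q + nright pg a b a q = ?N"
      using q by (intro nleft_plus_nright) auto
    moreover have "ccw pg a q (Suc b) = pg a (Suc b)"
      using q by (intro ccw_ordered) auto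
    ultimately show "(a, q) \<in> persistent_edges pg a b k"
      using q assms nleft_nright_Suc_right[of a a q b pg]
      unfolding J_def persistent_edges_def edges_def edge_index_def by (auto split: if_splits)
  qed
  have "card {q \<in> {Suc a..b}. nleft pg a b a q \<in> J} \<le>
      card {q \<in> {Suc a..b}. (a, q) \<in> persistent_edges pg a b k}"
    by (rule card_mono[OF _ persist]) simp
  then show ?thesis using card_J preimage by simp
qed

lemma card_persistent_edges_lower_bound:
  assumes "a \<le> b" "2 * k + 1 \<le> b - a"
  shows "(k + 1) * (k + 2) \<le> 2 * card (persistent_edges pg a b k)"
  using assms
proof (induction k arbitrary: a)
  case 0
  have "1 \<le> card {q \<in> {Suc a..b}. (a, q) \<in> persistent_edges pg a b 0}"
    using card_persistent_edges_leftmost[of a b 0 pg] 0 by simp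
  also have "\<dots> \<le> card (persistent_edges pg a b 0)"
    by (rule card_inj_on_le[where f = "\<lambda>q. (a, q)"]) (auto simp: inj_on_def)
  finally show ?case by simp
next
  case (Suc k)
  let ?P = "persistent_edges pg a b (Suc k)"
  let ?A = "(\<lambda>q. (a, q)) ` {q \<in> {Suc a..b}. (a, q) \<in> ?P}"
  have leftmost: "k + 2 \<le> card ?A"
    using card_persistent_edges_leftmost[of a b "Suc k" pg] Suc.prems
    by (subst card_image) (auto simp: inj_on_def)
  have IH: "(k + 1) * (k + 2) \<le> 2 * card (persistent_edges pg (Suc a) b k)"
    using Suc.IH[of "Suc a"] Suc.prems by auto
  have old_persist: "persistent_edges pg (Suc a) b k \<subseteq> ?P"
  proof
    fix e assume "e \<in> persistent_edges pg (Suc a) b k"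
    then obtain p q where pq: "e = (p, q)" "Suc a \<le> p" "p < q" "q \<le> b"
      and stays: "edge_index pg (Suc a) (Suc b) p q = edge_index pg (Suc a) b p q"
        "edge_index pg (Suc a) b p q \<le> k"
      unfolding persistent_edges_def edges_def by auto
    define l where "l = nleft pg (Suc a) b p q"
    define r where "r = nright pg (Suc a) b p q"
    define x where "x = (if ccw pg p q (Suc b) then 1 else 0 :: nat)"
    define y where "y = (if ccw pg p q a then 1 else 0 :: nat)"
    have sum: "l + r + 1 = b - a - 1"
      using nleft_plus_nright[of p "Suc a" b q pg] pq unfolding l_def r_def by auto
    have right: "nleft pg (Suc a) (Suc b) p q = l + x" "nright pg (Suc a) (Suc b) p q = r + (1 - x)"
      using nleft_nright_Suc_right[of "Suc a" p q b pg] pq unfolding l_def r_def x_def by auto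
    have left: "nleft pg a b p q = l + y" "nright pg a b p q = r + (1 - y)"
      using nleft_nright_Suc_left[of a p q b pg] pq unfolding l_def r_def y_def by auto
    have both: "nleft pg a (Suc b) p q = l + y + x" "nright pg a (Suc b) p q = r + (1 - y) + (1 - x)"
      using nleft_nright_Suc_left[of a p q "Suc b" pg] right pq unfolding y_def by auto
    have "min (l + y + x) (r + (1 - y) + (1 - x)) = min (l + y) (r + (1 - y))
        \<and> min (l + y) (r + (1 - y)) \<le> Suc k"
      by (rule index_persistence_arith[of l r "b - a - 1" x y k])
        (use sum Suc.prems stays right in \<open>auto simp: edge_index_def l_def r_def x_def y_def\<close>)
    then show "e \<in> ?P"
      using pq left both unfolding persistent_edges_def edges_def edge_index_def by auto
  qed
  have disjoint: "?A \<inter> persistent_edges pg (Suc a) b k = {}"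
    by (auto simp: persistent_edges_def edges_def)
  have "card ?A + card (persistent_edges pg (Suc a) b k) = card (?A \<union> persistent_edges pg (Suc a) b k)"
    using disjoint by (simp add: card_Un_disjoint)
  also have "\<dots> \<le> card ?P"
    using old_persist by (intro card_mono) auto
  finally have "card ?A + card (persistent_edges pg (Suc a) b k) \<le> card ?P" .
  then show ?case using leftmost IH by (simp add: algebra_simps)
qed

lemma E_weight_lower_bound:
  assumes "a \<le> b" "2 * k + 3 \<le> b - a"
  shows "(k + 1) * (k + 2) * (k + 3) \<le> 2 * E_weight pg a b (Suc k)"
  using assms
proof (induction k arbitrary: b)
  case 0
  obtain b' where b: "b = Suc b'" using 0 by (cases b) auto
  have "E_weight pg a b (Suc 0) = E_weight pg a b' 0 + card (persistent_edges pg a b' 0) + (0 + 1) * (0 + 2)"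
    unfolding b by (rule E_weight_Suc_right) (use 0 b in auto)
  moreover have "(0 + 1) * (0 + 2) \<le> 2 * card (persistent_edges pg a b' 0)"
    by (rule card_persistent_edges_lower_bound) (use 0 b in auto)
  ultimately show ?case by simp
next
  case (Suc k)
  obtain b' where b: "b = Suc b'" using Suc by (cases b) auto
  have "E_weight pg a b (Suc (Suc k)) =
      E_weight pg a b' (Suc k) + card (persistent_edges pg a b' (Suc k)) + (Suc k + 1) * (Suc k + 2)"
    unfolding b by (rule E_weight_Suc_right) (use Suc.prems b in auto)
  moreover have "(Suc k + 1) * (Suc k + 2) \<le> 2 * card (persistent_edges pg a b' (Suc k))"
    by (rule card_persistent_edges_lower_bound) (use Suc.prems b in auto)
  moreover have "(k + 1) * (k + 2) * (k + 3) \<le> 2 * E_weight pg a b' (Suc k)"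
    by (rule Suc.IH) (use Suc.prems b in auto)
  ultimately show ?case by (simp add: algebra_simps)
qed

text \<open>In the decomposition of \<open>E_weight pg 1 (Suc m) (Suc (Suc k))\<close> both summands meet their lower
  bounds with equality if the total does, so tightness passes from \<open>K\<^sub>m\<^sub>+\<^sub>1\<close> to \<open>K\<^sub>m\<close>.\<close>

lemma E_weight_tight_delete_rightmost:
  assumes tight: "\<And>k. k + 2 \<le> n div 2 \<Longrightarrow> 2 * E_weight pg 1 n (Suc k) = (k + 1) * (k + 2) * (k + 3)"
    and "j + k + 2 \<le> n div 2"
  shows "2 * E_weight pg 1 (n - j) (Suc k) = (k + 1) * (k + 2) * (k + 3)"
  using assms(2)
proof (induction j arbitrary: k)
  case 0
  then show ?case using tight by simp
next
  case (Suc j)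
  have nj: "n - j = Suc (n - Suc j)" using Suc.prems by auto
  have "E_weight pg 1 (n - j) (Suc (Suc k)) = E_weight pg 1 (n - Suc j) (Suc k)
      + card (persistent_edges pg 1 (n - Suc j) (Suc k)) + (Suc k + 1) * (Suc k + 2)"
    unfolding nj by (rule E_weight_Suc_right) (use Suc.prems in auto)
  moreover have "(Suc k + 1) * (Suc k + 2) \<le> 2 * card (persistent_edges pg 1 (n - Suc j) (Suc k))"
    by (rule card_persistent_edges_lower_bound) (use Suc.prems in auto)
  moreover have "2 * E_weight pg 1 (n - j) (Suc (Suc k)) = (Suc k + 1) * (Suc k + 2) * (Suc k + 3)"
    by (rule Suc.IH) (use Suc.prems in auto)
  moreover have "(k + 1) * (k + 2) * (k + 3) \<le> 2 * E_weight pg 1 (n - Suc j) (Suc k)"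
    by (rule E_weight_lower_bound) (use Suc.prems in auto)
  ultimately show ?case by (simp add: algebra_simps)
qed

lemma E_le_le_eq_E_weight:
  assumes "2 * k + 2 \<le> m"
  shows "E_le_le pg m k = E_weight pg 1 m (Suc k)"
proof -
  have E_eq: "E pg m i = card {e \<in> edges 1 m. edge_index pg 1 m (fst e) (snd e) = i}" if "i \<le> k" for i
  proof -
    have "is_k_edge pg m i p q \<longleftrightarrow> edge_index pg 1 m p q = i" if "(p, q) \<in> edges 1 m" for p q
    proof -
      have "nleft pg 1 m p q + nright pg 1 m p q = m - 2"
        using that nleft_plus_nright[of p 1 m q pg] by (auto simp: edges_def)
      then show ?thesis
        using \<open>i \<le> k\<close> assms
        by (auto simp: is_k_edge_def edge_index_def min_def left_count_def right_count_def
            nleft_def nright_def lefts_def rights_def)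
    qed
    then have "{(p, q). 1 \<le> p \<and> p < q \<and> q \<le> m \<and> is_k_edge pg m i p q} =
        {e \<in> edges 1 m. edge_index pg 1 m (fst e) (snd e) = i}"
      by (auto simp: edges_def)
    then show ?thesis unfolding E_def by simp
  qed
  have "E_le_le pg m k =
      (\<Sum>i\<le>k. \<Sum>e\<in>edges 1 m. if edge_index pg 1 m (fst e) (snd e) = i then k + 1 - i else 0)"
    unfolding E_le_le_def by (rule sum.cong) (simp_all add: E_eq sum.If_cases Int_def)
  also have "\<dots> = (\<Sum>e\<in>edges 1 m. \<Sum>i\<le>k. if edge_index pg 1 m (fst e) (snd e) = i then k + 1 - i else 0)"
    by (rule sum.swap)
  also have "\<dots> = E_weight pg 1 m (Suc k)"
    unfolding E_weight_def by (rule sum.cong) (auto simp: sum.delta)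
  finally show ?thesis .
qed

definition quadruples :: "nat \<Rightarrow> (nat \<times> nat \<times> nat \<times> nat) set" where
  "quadruples n = {(a, b, c, d). 1 \<le> a \<and> a < b \<and> b < c \<and> c < d \<and> d \<le> n}"

definition separations :: "nat \<Rightarrow> ((nat \<times> nat) \<times> (nat \<times> nat)) set" where
  "separations n = {((p, q), (r, s)). (p, q) \<in> edges 1 n \<and> r \<in> {1..n} \<and> s \<in> {1..n} \<and> distinct [p, q, r, s]}"

definition separates :: "(nat \<Rightarrow> nat \<Rightarrow> bool) \<Rightarrow> (nat \<times> nat) \<times> (nat \<times> nat) \<Rightarrow> bool" where
  "separates pg x = (case x of ((p, q), (r, s)) \<Rightarrow> ccw pg p q r \<and> \<not> ccw pg p q s)"

definition crossing_quadruple :: "(nat \<Rightarrow> nat \<Rightarrow> bool) \<Rightarrow> nat \<times> nat \<times> nat \<times> nat \<Rightarrow> bool" where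
  "crossing_quadruple pg t = (case t of (a, b, c, d) \<Rightarrow> pg a c = pg b d)"

text \<open>The twelve ways to choose an edge of a quadruple and an order of its two other vertices.\<close>

definition arrangement :: "nat \<times> nat \<times> nat \<times> nat \<Rightarrow> nat \<Rightarrow> (nat \<times> nat) \<times> (nat \<times> nat)" where
  "arrangement t i = (case t of (a, b, c, d) \<Rightarrow>
     [((a, b), (c, d)), ((a, b), (d, c)), ((a, c), (b, d)), ((a, c), (d, b)),
      ((a, d), (b, c)), ((a, d), (c, b)), ((b, c), (a, d)), ((b, c), (d, a)),
      ((b, d), (a, c)), ((b, d), (c, a)), ((c, d), (a, b)), ((c, d), (b, a))] ! i)"

lemma finite_quadruples [simp]: "finite (quadruples n)"
  by (rule finite_subset[of _ "{1..n} \<times> {1..n} \<times> {1..n} \<times> {1..n}"]) (auto simp: quadruples_def)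

lemma finite_separations [simp]: "finite (separations n)"
  by (rule finite_subset[of _ "({1..n} \<times> {1..n}) \<times> ({1..n} \<times> {1..n})"])
    (auto simp: separations_def edges_def)

lemma less_12_cases: "i < (12::nat) \<longleftrightarrow>
    i = 0 \<or> i = 1 \<or> i = 2 \<or> i = 3 \<or> i = 4 \<or> i = 5 \<or> i = 6 \<or> i = 7 \<or> i = 8 \<or> i = 9 \<or> i = 10 \<or> i = 11"
  by presburger

lemma arrangement_eq_imp_eq:
  assumes "a < b" "b < c" "c < d" "a' < b'" "b' < c'" "c' < d'" "i < 12" "i' < 12"
    and "arrangement (a, b, c, d) i = arrangement (a', b', c', d') i'"
  shows "(a, b, c, d) = (a', b', c', d') \<and> i = i'"
  using assms(7,8) unfolding less_12_cases
  by (elim disjE) (use assms(1-6,9) in \<open>simp_all add: arrangement_def\<close>)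

lemma arrangement_in_separations:
  assumes "(a, b, c, d) \<in> quadruples n" "i < 12"
  shows "arrangement (a, b, c, d) i \<in> separations n"
  using assms(2) unfolding less_12_cases
  by (elim disjE) (use assms(1) in \<open>simp_all add: arrangement_def quadruples_def separations_def edges_def\<close>)

lemma separations_arrangement:
  assumes "x \<in> separations n"
  obtains t i where "t \<in> quadruples n" "i < 12" "x = arrangement t i"
proof -
  obtain p q r s where x: "x = ((p, q), (r, s))"
    and range: "1 \<le> p" "p < q" "q \<le> n" "1 \<le> r" "r \<le> n" "1 \<le> s" "s \<le> n"
    and distinct: "r \<noteq> p" "r \<noteq> q" "s \<noteq> p" "s \<noteq> q" "r \<noteq> s"
    using assms unfolding separations_def edges_def by auto
  consider "q < r" "r < s" | "q < s" "s < r" | "p < r" "r < q" "q < s" | "p < s" "s < q" "q < r"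
    | "p < r" "r < s" "s < q" | "p < s" "s < r" "r < q" | "r < p" "q < s" | "s < p" "q < r"
    | "r < p" "p < s" "s < q" | "s < p" "p < r" "r < q" | "r < s" "s < p" | "s < r" "r < p"
    using range distinct
    by (cases "r < p"; cases "s < p"; cases "r < q"; cases "s < q"; cases "r < s") auto
  then show thesis
  proof cases
    case 1 show thesis by (rule that[of "(p, q, r, s)" 0]) (use 1 range x in \<open>auto simp: quadruples_def arrangement_def\<close>)
  next
    case 2 show thesis by (rule that[of "(p, q, s, r)" 1]) (use 2 range x in \<open>auto simp: quadruples_def arrangement_def\<close>)
  next
    case 3 show thesis by (rule that[of "(p, r, q, s)" 2]) (use 3 range x in \<open>auto simp: quadruples_def arrangement_def\<close>)
  next
    case 4 show thesis by (rule that[of "(p, s, q, r)" 3]) (use 4 range x in \<open>auto simp: quadruples_def arrangement_def\<close>)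
  next
    case 5 show thesis by (rule that[of "(p, r, s, q)" 4]) (use 5 range x in \<open>auto simp: quadruples_def arrangement_def\<close>)
  next
    case 6 show thesis by (rule that[of "(p, s, r, q)" 5]) (use 6 range x in \<open>auto simp: quadruples_def arrangement_def\<close>)
  next
    case 7 show thesis by (rule that[of "(r, p, q, s)" 6]) (use 7 range x in \<open>auto simp: quadruples_def arrangement_def\<close>)
  next
    case 8 show thesis by (rule that[of "(s, p, q, r)" 7]) (use 8 range x in \<open>auto simp: quadruples_def arrangement_def\<close>)
  next
    case 9 show thesis by (rule that[of "(r, p, s, q)" 8]) (use 9 range x in \<open>auto simp: quadruples_def arrangement_def\<close>)
  next
    case 10 show thesis by (rule that[of "(s, p, r, q)" 9]) (use 10 range x in \<open>auto simp: quadruples_def arrangement_def\<close>)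
  next
    case 11 show thesis by (rule that[of "(r, s, p, q)" 10]) (use 11 range x in \<open>auto simp: quadruples_def arrangement_def\<close>)
  next
    case 12 show thesis by (rule that[of "(s, r, p, q)" 11]) (use 12 range x in \<open>auto simp: quadruples_def arrangement_def\<close>)
  qed
qed

lemma bij_betw_arrangement:
  "bij_betw (\<lambda>(t, i). arrangement t i) (quadruples n \<times> {..<12}) (separations n)"
proof -
  have "inj_on (\<lambda>(t, i). arrangement t i) (quadruples n \<times> {..<12})"
    by (rule inj_onI) (auto simp: quadruples_def dest: arrangement_eq_imp_eq)
  moreover have "(\<lambda>(t, i). arrangement t i) ` (quadruples n \<times> {..<12}) \<subseteq> separations n"
    using arrangement_in_separations by auto
  moreover have "separations n \<subseteq> (\<lambda>(t, i). arrangement t i) ` (quadruples n \<times> {..<12})"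
  proof
    fix x assume "x \<in> separations n"
    then obtain t i where "t \<in> quadruples n" "i < 12" "x = arrangement t i"
      by (rule separations_arrangement)
    then show "x \<in> (\<lambda>(t, i). arrangement t i) ` (quadruples n \<times> {..<12})" by force
  qed
  ultimately show ?thesis unfolding bij_betw_def by blast
qed

text \<open>The per-quadruple form of \<open>cr(D) + \<Sum>\<^sub>e L(e) R(e) = 3 (n choose 4)\<close>, checked by evaluating \<open>ccw\<close>.\<close>

lemma card_separating_arrangements:
  assumes "a < b" "b < c" "c < d"
  shows "(\<Sum>i<12. if separates pg (arrangement (a, b, c, d) i) then 1 else 0 :: nat)
    + (if crossing_quadruple pg (a, b, c, d) then 1 else 0) = 3"
  using assms
  by (simp add: numeral_eq_Suc arrangement_def separates_def crossing_quadruple_def ccw_def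
      Let_def min_def max_def)

lemma crossings_eq_card_quadruples:
  "crossings pg n = card {t \<in> quadruples n. crossing_quadruple pg t}"
proof -
  have "{(a, b, c, d). 1 \<le> a \<and> a < c \<and> c < b \<and> b < d \<and> d \<le> n \<and> pg a b = pg c d}
     = (\<lambda>(a, b, c, d). (a, c, b, d)) ` {t \<in> quadruples n. crossing_quadruple pg t}"
    by (force simp: quadruples_def crossing_quadruple_def image_iff)
  moreover have "inj_on (\<lambda>(a, b, c, d). (a, c, b, d)) {t \<in> quadruples n. crossing_quadruple pg t}"
    by (auto simp: inj_on_def)
  ultimately show ?thesis unfolding crossings_def by (simp add: card_image)
qed

lemma sum_nleft_nright_eq_card_separating:
  "(\<Sum>(p, q)\<in>edges 1 n. nleft pg 1 n p q * nright pg 1 n p q) = card {x \<in> separations n. separates pg x}"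
proof -
  have "(\<Sum>(p, q)\<in>edges 1 n. nleft pg 1 n p q * nright pg 1 n p q)
      = (\<Sum>e\<in>edges 1 n. card (lefts pg 1 n (fst e) (snd e) \<times> rights pg 1 n (fst e) (snd e)))"
    by (rule sum.cong) (auto simp: nleft_def nright_def card_cartesian_product)
  also have "\<dots> = card (SIGMA e:edges 1 n. lefts pg 1 n (fst e) (snd e) \<times> rights pg 1 n (fst e) (snd e))"
    by (rule card_SigmaI[symmetric]) (auto simp: lefts_def rights_def)
  also have "(SIGMA e:edges 1 n. lefts pg 1 n (fst e) (snd e) \<times> rights pg 1 n (fst e) (snd e))
      = {x \<in> separations n. separates pg x}"
    by (auto simp: edges_def lefts_def rights_def separations_def separates_def)
  finally show ?thesis .
qed

lemma crossings_plus_sum_nleft_nright: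
  "crossings pg n + (\<Sum>(p, q)\<in>edges 1 n. nleft pg 1 n p q * nright pg 1 n p q) = 3 * card (quadruples n)"
proof -
  let ?ind = "\<lambda>P. if P then 1 else 0 :: nat"
  have "card {x \<in> separations n. separates pg x} = (\<Sum>x\<in>separations n. ?ind (separates pg x))"
    by (simp add: sum.If_cases Int_def conj_commute)
  also have "\<dots> = (\<Sum>(t, i)\<in>quadruples n \<times> {..<12}. ?ind (separates pg (arrangement t i)))"
    by (subst sum.reindex_bij_betw[OF bij_betw_arrangement, symmetric]) (simp add: case_prod_beta)
  also have "\<dots> = (\<Sum>t\<in>quadruples n. \<Sum>i<12. ?ind (separates pg (arrangement t i)))"
    by (rule sum.cartesian_product[symmetric])
  also have "\<dots> = (\<Sum>t\<in>quadruples n. 3 - ?ind (crossing_quadruple pg t))"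
  proof (rule sum.cong)
    fix t assume t: "t \<in> quadruples n"
    obtain a b c d where t_eq: "t = (a, b, c, d)" by (cases t)
    have "a < b" "b < c" "c < d" using t unfolding t_eq quadruples_def by auto
    then show "(\<Sum>i<12. ?ind (separates pg (arrangement t i))) = 3 - ?ind (crossing_quadruple pg t)"
      unfolding t_eq using card_separating_arrangements[of a b c d pg] by linarith
  qed simp
  finally have "card {x \<in> separations n. separates pg x}
      = (\<Sum>t\<in>quadruples n. 3 - ?ind (crossing_quadruple pg t))" .
  moreover have "crossings pg n = (\<Sum>t\<in>quadruples n. ?ind (crossing_quadruple pg t))"
    unfolding crossings_eq_card_quadruples by (simp add: sum.If_cases Int_def conj_commute)
  ultimately have "crossings pg n + card {x \<in> separations n. separates pg x}
      = (\<Sum>t\<in>quadruples n. ?ind (crossing_quadruple pg t) + (3 - ?ind (crossing_quadruple pg t)))"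
    by (simp only: sum.distrib)
  also have "\<dots> = 3 * card (quadruples n)" by simp
  finally show ?thesis unfolding sum_nleft_nright_eq_card_separating .
qed

definition triples :: "nat \<Rightarrow> (nat \<times> nat \<times> nat) set" where
  "triples n = {(a, b, c). 1 \<le> a \<and> a < b \<and> b < c \<and> c \<le> n}"

lemma finite_triples [simp]: "finite (triples n)"
  by (rule finite_subset[of _ "{1..n} \<times> {1..n} \<times> {1..n}"]) (auto simp: triples_def)

lemma card_edges: "card (edges 1 n) = n choose 2"
proof (induction n)
  case 0
  have "edges 1 0 = {}" by (auto simp: edges_def)
  then show ?case by simp
next
  case (Suc n)
  have "edges 1 n \<inter> (\<lambda>p. (p, Suc n)) ` {1..n} = {}" by (auto simp: edges_def)
  then have "card (edges 1 (Suc n)) = card (edges 1 n) + card ((\<lambda>p. (p, Suc n)) ` {1..n})"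
    unfolding edges_Suc by (intro card_Un_disjoint) auto
  also have "card ((\<lambda>p. (p, Suc n)) ` {1..n}) = n" by (subst card_image) (auto simp: inj_on_def)
  finally show ?case using Suc by (simp add: numeral_2_eq_2)
qed

lemma card_triples: "card (triples n) = n choose 3"
proof (induction n)
  case 0
  have "triples 0 = {}" by (auto simp: triples_def)
  then show ?case by (simp add: eval_nat_numeral)
next
  case (Suc n)
  have "triples (Suc n) = triples n \<union> (\<lambda>(a, b). (a, b, Suc n)) ` edges 1 n"
    by (auto simp: triples_def edges_def image_iff le_Suc_eq)
  moreover have "triples n \<inter> (\<lambda>(a, b). (a, b, Suc n)) ` edges 1 n = {}"
    by (auto simp: triples_def)
  ultimately have "card (triples (Suc n)) = card (triples n) + card ((\<lambda>(a, b). (a, b, Suc n)) ` edges 1 n)"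
    by (simp add: card_Un_disjoint)
  also have "card ((\<lambda>(a, b). (a, b, Suc n)) ` edges 1 n) = n choose 2"
    by (subst card_image, force simp: inj_on_def, rule card_edges)
  finally show ?case using Suc by (simp add: numeral_3_eq_3 numeral_2_eq_2)
qed

lemma card_quadruples: "card (quadruples n) = n choose 4"
proof (induction n)
  case 0
  have "quadruples 0 = {}" by (auto simp: quadruples_def)
  then show ?case by (simp add: eval_nat_numeral)
next
  case (Suc n)
  have "quadruples (Suc n) = quadruples n \<union> (\<lambda>(a, b, c). (a, b, c, Suc n)) ` triples n"
    by (auto simp: quadruples_def triples_def image_iff le_Suc_eq)
  moreover have "quadruples n \<inter> (\<lambda>(a, b, c). (a, b, c, Suc n)) ` triples n = {}"
    by (auto simp: quadruples_def)
  ultimately have "card (quadruples (Suc n)) =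
      card (quadruples n) + card ((\<lambda>(a, b, c). (a, b, c, Suc n)) ` triples n)"
    by (simp add: card_Un_disjoint)
  also have "card ((\<lambda>(a, b, c). (a, b, c, Suc n)) ` triples n) = n choose 3"
    by (subst card_image) (auto simp: inj_on_def card_triples)
  finally show ?case using Suc by (simp add: eval_nat_numeral)
qed

lemma choose_2_times: "2 * (n choose 2) = n * (n - 1)"
  by (induction n) (auto simp: numeral_2_eq_2 algebra_simps)

lemma choose_3_times: "6 * (n choose 3) = n * (n - 1) * (n - 2)"
proof (induction n)
  case (Suc n)
  have "Suc n choose 3 = (n choose 2) + (n choose 3)"
    by (simp add: numeral_3_eq_3 numeral_2_eq_2)
  then show ?case using Suc choose_2_times[of n] by (cases n) (auto simp: algebra_simps)
qed (simp add: numeral_3_eq_3)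

lemma choose_4_times: "24 * (n choose 4) = n * (n - 1) * (n - 2) * (n - 3)"
proof (induction n)
  case (Suc n)
  have step: "Suc n choose 4 = (n choose 3) + (n choose 4)"
    by (simp add: eval_nat_numeral)
  show ?case
  proof (cases "n < 3")
    case True
    then show ?thesis by (auto simp: binomial_eq_0 less_Suc_eq)
  next
    case False
    then obtain m where "n = m + 3" using le_Suc_ex[of 3 n] by (auto simp: add.commute)
    then show ?thesis using Suc step choose_3_times[of n] by (simp add: algebra_simps)
  qed
qed (simp add: eval_nat_numeral)

lemma sum_products_of_three:
  "4 * (\<Sum>i<m. (i + 1) * (i + 2) * (i + 3)) = m * (m + 1) * (m + 2) * (m + 3)" for m :: nat
  by (induction m) (auto simp: algebra_simps)

lemma sum_Suc_minus: "2 * (\<Sum>i<m. Suc i - x) = (m - x) * (m + 1 - x)"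
proof (induction m)
  case (Suc m)
  show ?case
  proof (cases "x \<le> m")
    case True
    then obtain d where "m = x + d" by (metis le_add_diff_inverse)
    then show ?thesis using Suc by (simp add: algebra_simps)
  qed (use Suc in simp)
qed simp

text \<open>For an edge of index \<open>x \<le> K\<close> in \<open>K\<^sub>n\<close>, \<open>n = 2K + c + 1\<close>, the product \<open>L(e) R(e) = x (n - 2 - x)\<close>
  is an affine function of the weights \<open>(i + 1 - x)\<^sup>+\<close>, \<open>i < K\<close>, with positive coefficients.\<close>

lemma edge_product_identity:
  fixes x K c :: nat
  assumes "x \<le> K" "1 \<le> c"
  shows "x * (2 * K + c - 1 - x) + 2 * (\<Sum>i<K - 1. Suc i - x) + c * (K - x) = K * (K + c - 1)"
proof -
  obtain d where d: "K = x + d" using assms by (metis le_add_diff_inverse)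
  obtain c' where c: "c = Suc c'" using assms by (cases c) auto
  have "2 * (\<Sum>i<K - 1. Suc i - x) = (K - 1 - x) * (K - x)"
    using sum_Suc_minus[where m = "K - 1" and x = x] assms by (cases K) auto
  moreover have "x * (2 * K + c - 1 - x) + (K - 1 - x) * (K - x) + c * (K - x) = K * (K + c - 1)"
    using d c by (cases d) (auto simp: algebra_simps)
  ultimately show ?thesis by simp
qed

lemma sum_nleft_nright_plus_E_weights:
  assumes "4 \<le> n"
  defines "K \<equiv> n div 2 - 1"
  defines "c \<equiv> n - 1 - 2 * K"
  shows "(\<Sum>(p, q)\<in>edges 1 n. nleft pg 1 n p q * nright pg 1 n p q)
      + 2 * (\<Sum>i<K - 1. E_weight pg 1 n (Suc i)) + c * E_weight pg 1 n K
    = (n choose 2) * (K * (K + c - 1))"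
proof -
  have n: "n = 2 * K + c + 1" "1 \<le> c" "c \<le> 2" unfolding c_def K_def using assms(1) by auto
  have per_edge: "nleft pg 1 n p q * nright pg 1 n p q
      + 2 * (\<Sum>i<K - 1. Suc i - edge_index pg 1 n p q) + c * (K - edge_index pg 1 n p q)
      = K * (K + c - 1)" if "(p, q) \<in> edges 1 n" for p q
  proof -
    define x where "x = edge_index pg 1 n p q"
    have "nleft pg 1 n p q + nright pg 1 n p q = 2 * K + c - 1"
      using that nleft_plus_nright[of p 1 n q pg] n by (auto simp: edges_def)
    then have "nleft pg 1 n p q * nright pg 1 n p q = x * (2 * K + c - 1 - x)" and "x \<le> K"
      using n(3) unfolding x_def edge_index_def min_def by auto
    then show ?thesis using edge_product_identity[of x K c] n unfolding x_def by simp
  qed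
  have "(\<Sum>(p, q)\<in>edges 1 n. nleft pg 1 n p q * nright pg 1 n p q
      + 2 * (\<Sum>i<K - 1. Suc i - edge_index pg 1 n p q) + c * (K - edge_index pg 1 n p q))
    = (n choose 2) * (K * (K + c - 1))"
    using per_edge card_edges[of n] by (simp add: case_prod_beta)
  moreover have "(\<Sum>(p, q)\<in>edges 1 n. 2 * (\<Sum>i<K - 1. Suc i - edge_index pg 1 n p q))
      = 2 * (\<Sum>i<K - 1. E_weight pg 1 n (Suc i))"
    unfolding E_weight_def by (simp add: sum_distrib_left case_prod_beta) (rule sum.swap)
  moreover have "(\<Sum>(p, q)\<in>edges 1 n. c * (K - edge_index pg 1 n p q)) = c * E_weight pg 1 n K"
    unfolding E_weight_def by (simp add: sum_distrib_left case_prod_beta)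
  ultimately show ?thesis by (simp add: sum.distrib case_prod_beta)
qed

lemma crossing_number_identity:
  fixes n :: nat
  assumes "4 \<le> n"
  defines "K \<equiv> n div 2 - 1"
  defines "c \<equiv> n - 1 - 2 * K"
  shows "2 * ((n div 2) * ((n - 1) div 2) * ((n - 2) div 2) * ((n - 3) div 2))
      + 4 * (n * (n - 1)) * (K * (K + c - 1))
    = n * (n - 1) * (n - 2) * (n - 3) + 2 * ((K - 1) * K * (K + 1) * (K + 2)) + 4 * c * (K * (K + 1) * (K + 2))"
proof -
  define t where "t = (n - 4) div 2"
  have "n = 2 * t + 4 \<or> n = 2 * t + 5" using assms(1) unfolding t_def by presburger
  then show ?thesis
  proof
    assume n: "n = 2 * t + 4"
    have "n div 2 = t + 2" "(n - 1) div 2 = t + 1" "(n - 2) div 2 = t + 1" "(n - 3) div 2 = t"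
      "K = t + 1" "c = 1"
      unfolding K_def c_def using n by presburger+
    then show ?thesis unfolding n by (simp add: algebra_simps)
  next
    assume n: "n = 2 * t + 5"
    have "n div 2 = t + 2" "(n - 1) div 2 = t + 2" "(n - 2) div 2 = t + 1" "(n - 3) div 2 = t + 1"
      "K = t + 1" "c = 2"
      unfolding K_def c_def using n by presburger+
    then show ?thesis unfolding n by (simp add: algebra_simps)
  qed
qed

lemma sum_weighted_eq_imp_eq:
  fixes f g w :: "'a \<Rightarrow> nat"
  assumes "finite I" "\<forall>i\<in>I. f i \<le> g i" "\<forall>i\<in>I. 0 < w i"
    and "(\<Sum>i\<in>I. w i * f i) = (\<Sum>i\<in>I. w i * g i)" "i \<in> I"
  shows "f i = g i"
proof (rule ccontr)
  assume "f i \<noteq> g i"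
  then have "w i * f i < w i * g i" using assms(2,3,5) by auto
  then have "(\<Sum>i\<in>I. w i * f i) < (\<Sum>i\<in>I. w i * g i)"
    using assms(1,2,5) by (intro sum_strict_mono_ex1) auto
  then show False using assms(4) by simp
qed

text \<open>Up to a constant, \<open>cr(D) = 3 (n choose 4) - \<Sum>\<^sub>e L(e) R(e)\<close> is a positive combination of the
  \<open>E\<^sub>\<le>\<^sub>\<le>\<^sub>i\<close>, \<open>i < K\<close>; so \<open>cr(D) = Z(n)\<close> forces each bound \<open>E_weight_lower_bound\<close> to be tight.\<close>

lemma E_weight_tight_if_crossing_optimal:
  assumes "crossing_optimal pg n" "4 \<le> n" "k + 2 \<le> n div 2"
  shows "2 * E_weight pg 1 n (Suc k) = (k + 1) * (k + 2) * (k + 3)"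
proof -
  define K where "K = n div 2 - 1"
  define c where "c = n - 1 - 2 * K"
  define S where "S = (\<Sum>i<K - 1. E_weight pg 1 n (Suc i))"
  define A where "A i = 2 * E_weight pg 1 n (Suc i)" for i
  define B where "B i = (i + 1) * (i + 2) * (i + 3)" for i :: nat
  define w where "w i = (if i < K - 1 then 8 else 4 * c)" for i :: nat
  have K: "K = Suc (K - 1)" "1 \<le> c" unfolding K_def c_def using assms(2) by auto
  have split_weighted: "(\<Sum>i<K. w i * f i) = 8 * (\<Sum>i<K - 1. f i) + 4 * c * f (K - 1)" for f
  proof -
    have "(\<Sum>i<K. w i * f i) = (\<Sum>i<K - 1. w i * f i) + w (K - 1) * f (K - 1)"
      by (subst K(1)) (simp del: Suc_pred)
    then show ?thesis by (simp add: w_def sum_distrib_left)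
  qed
  define P where "P = (n div 2) * ((n - 1) div 2) * ((n - 2) div 2) * ((n - 3) div 2)"
  define SLR where "SLR = (\<Sum>(p, q)\<in>edges 1 n. nleft pg 1 n p q * nright pg 1 n p q)"
  define F where "F = K * (K + c - 1)"
  have "real (crossings pg n) = (1 / 4) * real P"
    using assms(1) unfolding crossing_optimal_def Z_def P_def by simp
  then have optimal: "4 * crossings pg n = P" by linarith
  have crossings: "crossings pg n + SLR = 3 * (n choose 4)"
    using crossings_plus_sum_nleft_nright[of pg n] unfolding SLR_def by (simp add: card_quadruples)
  have products: "SLR + 2 * S + c * E_weight pg 1 n K = (n choose 2) * F"
    using sum_nleft_nright_plus_E_weights[OF assms(2), of pg] unfolding SLR_def S_def F_def K_def c_def .
  have identity: "2 * P + 4 * (n * (n - 1)) * F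
      = n * (n - 1) * (n - 2) * (n - 3) + 2 * ((K - 1) * K * (K + 1) * (K + 2)) + 4 * c * (K * (K + 1) * (K + 2))"
    using crossing_number_identity[OF assms(2)] unfolding P_def F_def K_def c_def .
  have choose_2: "4 * (n * (n - 1)) * F = 8 * ((n choose 2) * F)"
    unfolding choose_2_times[of n, symmetric] by simp
  have B_values: "4 * (\<Sum>i<K - 1. B i) = (K - 1) * K * (K + 1) * (K + 2)" "B (K - 1) = K * (K + 1) * (K + 2)"
    using sum_products_of_three[of "K - 1"] K unfolding B_def by (simp_all add: algebra_simps)
  have A_values: "(\<Sum>i<K - 1. A i) = 2 * S" "A (K - 1) = 2 * E_weight pg 1 n K"
    using K unfolding A_def S_def by (simp_all add: sum_distrib_left)
  have "(\<Sum>i<K. w i * B i) = (\<Sum>i<K. w i * A i)"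
    unfolding split_weighted A_values B_values(2)
    using optimal crossings products identity choose_2 B_values(1) choose_4_times[of n] by linarith
  moreover have "\<forall>i\<in>{..<K}. B i \<le> A i"
  proof
    fix i assume "i \<in> {..<K}"
    then have "i + 2 \<le> n div 2" unfolding K_def by simp
    then have "2 * i + 3 \<le> n - 1" by presburger
    then show "B i \<le> A i" unfolding A_def B_def by (intro E_weight_lower_bound) simp_all
  qed
  moreover have "\<forall>i\<in>{..<K}. 0 < w i" using K by (simp add: w_def)
  moreover have "k \<in> {..<K}" using assms(3) unfolding K_def by simp
  ultimately have "B k = A k" by (intro sum_weighted_eq_imp_eq[of "{..<K}" B A w k]) auto
  then show ?thesis unfolding A_def B_def by simp
qed

theorem lemma11:
  fixes pg :: "nat \<Rightarrow> nat \<Rightarrow> bool" and n j k :: nat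
  assumes "normalized pg n"
    and "crossing_optimal pg n"
    and "j + 2 \<le> n div 2"
    and "k + j + 2 \<le> n div 2"
  shows "E_le_le pg (n - j) k = 3 * ((k + 3) choose 3)"
proof -
  have "4 \<le> n" using assms(3) by auto
  have "2 * E_weight pg 1 (n - j) (Suc k) = (k + 1) * (k + 2) * (k + 3)"
    by (rule E_weight_tight_delete_rightmost)
      (use E_weight_tight_if_crossing_optimal[OF assms(2) \<open>4 \<le> n\<close>] assms(4) in auto)
  moreover have "E_le_le pg (n - j) k = E_weight pg 1 (n - j) (Suc k)"
    by (rule E_le_le_eq_E_weight) (use assms(4) in auto)
  moreover have "6 * ((k + 3) choose 3) = (k + 1) * (k + 2) * (k + 3)"
    using choose_3_times[of "k + 3"] by (simp add: algebra_simps)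
  ultimately show ?thesis by linarith
qed

end
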